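(* (a) For integers $n\ge d\ge 2$ with $d\mid dn$ (always true), $\mathrm{diam}(Q_n(d,n))=n+\max\{\lfloor n/2\rfloor,\,2\lceil n/d\rceil-2\}$ (here $n\ge 3$). (b) For integers $d\ge1$, $r\ge3$ with $dr\ge 2$: $\mathrm{diam}(COR(d,r))=(d+1)r$ if $r=3$, and $\mathrm{diam}(COR(d,r))=(d+1)r+\lfloor r/2\rfloor-2$ if $r\ge4$.
   Context: For $m\ge1$, $\mathbb{Z}_2^m=\{0,1\}^m$ with coordinatewise addition mod 2; $e_i$ is the $i$-th standard basis vector, subscripts read modulo $m$; $\sigma^j(b)$ is the vector with $\sigma^j(b)_{i+j}=b_i$ (indices mod $m$). The recursive cube of rings $Q_n(d,r)$ (for $n\ge d$, $dr\equiv0\pmod n$) is the simple graph on $\mathbb{Z}_2^n\times\mathbb{Z}_r$ in which $(a,x)$ is adjacent to $(a+e_{i+dx},x)$ for $1\le i\le d$ and to $(a,x\pm1)$. The cube-of-rings $COR(d,r)$ is the Cayley graph on the group with underlying set $\mathbb{Z}_2^{dr}\times\mathbb{Z}_r$ and multiplication $(a,x)(b,y)=(\sigma^{dy}(a)+b,x+y)$, with connection set $\{(0_{dr},1),(0_{dr},r-1),(e_1,0),\dots,(e_d,0)\}$ ($u\sim v$ iff $u^{-1}v$ is in the connection set). *)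

theory Defs
  imports Main "HOL-Library.Extended_Nat"
begin

text \<open>A graph is given by a vertex set V and an adjacency relation E (assumed to
only relate vertices of V).\<close>

definition gdist :: "('a \<Rightarrow> 'a \<Rightarrow> bool) \<Rightarrow> 'a \<Rightarrow> 'a \<Rightarrow> enat" where
  "gdist E u v = (if \<exists>k. (E ^^ k) u v then enat (LEAST k. (E ^^ k) u v) else \<infinity>)"

definition gdiam :: "'a set \<Rightarrow> ('a \<Rightarrow> 'a \<Rightarrow> bool) \<Rightarrow> enat" where
  "gdiam V E = (SUP p \<in> V \<times> V. gdist E (fst p) (snd p))"

text \<open>A vector b in Z_2^m is represented by its support, a subset of {0..<m};
the paper's coordinate i (1 \<le> i \<le> m, read mod m) is position (i - 1) mod m here.
Addition is symmetric difference; e_i is the singleton {(i-1) mod m}.\<close>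

definition symdiff :: "nat set \<Rightarrow> nat set \<Rightarrow> nat set" where
  "symdiff A B = (A - B) \<union> (B - A)"

definition unitv :: "nat \<Rightarrow> nat \<Rightarrow> nat set" where
  "unitv m i = {(i + m - 1) mod m}"

definition shiftv :: "nat \<Rightarrow> nat \<Rightarrow> nat set \<Rightarrow> nat set" where
  "shiftv m j b = (\<lambda>i. (i + j) mod m) ` b"

definition Qverts :: "nat \<Rightarrow> nat \<Rightarrow> (nat set \<times> nat) set" where
  "Qverts n r = {(a, x). a \<subseteq> {0..<n} \<and> x < r}"

definition Qadj :: "nat \<Rightarrow> nat \<Rightarrow> nat \<Rightarrow> nat set \<times> nat \<Rightarrow> nat set \<times> nat \<Rightarrow> bool" where
  "Qadj n d r u v \<longleftrightarrow> u \<in> Qverts n r \<and> v \<in> Qverts n r \<and> u \<noteq> v \<and>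
     ((snd v = snd u \<and> (\<exists>i\<in>{1..d}. fst v = symdiff (fst u) (unitv n (i + d * snd u)))) \<or>
      (fst v = fst u \<and> (snd v = (snd u + 1) mod r \<or> snd v = (snd u + r - 1) mod r)))"

text \<open>Group on Z_2^{dr} \<times> Z_r with (a,x)(b,y) = (sigma^{dy}(a) + b, x + y).\<close>

definition cor_mult :: "nat \<Rightarrow> nat \<Rightarrow> nat set \<times> nat \<Rightarrow> nat set \<times> nat \<Rightarrow> nat set \<times> nat" where
  "cor_mult d r u v = (symdiff (shiftv (d * r) (d * snd v) (fst u)) (fst v), (snd u + snd v) mod r)"

definition cor_inv :: "nat \<Rightarrow> nat \<Rightarrow> nat set \<times> nat \<Rightarrow> nat set \<times> nat" where
  "cor_inv d r u = (shiftv (d * r) (d * ((r - snd u) mod r)) (fst u), (r - snd u) mod r)"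

definition cor_conn :: "nat \<Rightarrow> nat \<Rightarrow> (nat set \<times> nat) set" where
  "cor_conn d r = {({}, 1), ({}, r - 1)} \<union> {(unitv (d * r) i, 0) | i. i \<in> {1..d}}"

definition CORverts :: "nat \<Rightarrow> nat \<Rightarrow> (nat set \<times> nat) set" where
  "CORverts d r = {(a, x). a \<subseteq> {0..<d * r} \<and> x < r}"

definition CORadj :: "nat \<Rightarrow> nat \<Rightarrow> nat set \<times> nat \<Rightarrow> nat set \<times> nat \<Rightarrow> bool" where
  "CORadj d r u v \<longleftrightarrow> u \<in> CORverts d r \<and> v \<in> CORverts d r \<and>
     cor_mult d r (cor_inv d r u) v \<in> cor_conn d r"

end

theory Submission
  imports Defs
begin

text \<open>
  Write a vertex as \<open>(a, x)\<close> with a support \<open>a \<subseteq> {0..<N}\<close> and a ring position \<open>x\<close>. A walk from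
  \<open>(a, x)\<close> to \<open>(b, y)\<close> must flip every coordinate of the symmetric difference of \<open>a\<close> and \<open>b\<close>,
  each at a moment when the window of \<open>d\<close> coordinates attached to the current ring position
  contains it. If the ring coordinate ranges over the displacements \<open>[lo, hi] \<ni> 0\<close> and ends at
  displacement \<open>e\<close>, the walk needs at least \<open>|a \<union> b - a \<inter> b| + 2 (hi - lo) - |e|\<close> steps, and
  one sweep of the interval attains this. So the diameter is \<open>N\<close> plus the worst case, over
  pairs of ring positions, of the cheapest excursion whose windows cover all coordinates. When
  \<open>N\<close> divides \<open>d r\<close>, covering means visiting at least \<open>\<lceil>N / d\<rceil>\<close> ring positions, and a short
  optimisation over the integers gives part (a). The group inversion \<open>u \<mapsto> u\<inverse>\<close> is an
  isomorphism from \<open>COR(d,r)\<close> onto \<open>Q\<^sub>d\<^sub>r(d,r)\<close>, where covering means visiting all \<open>r\<close> ring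
  positions; this gives part (b).
\<close>

section \<open>Distances and diameters\<close>

lemma gdist_le: "(E ^^ k) u v \<Longrightarrow> gdist E u v \<le> enat k"
  unfolding gdist_def by (auto intro: Least_le)

lemma gdist_ge:
  assumes "\<And>j. j < k \<Longrightarrow> \<not> (E ^^ j) u v"
  shows "enat k \<le> gdist E u v"
proof (cases "\<exists>j. (E ^^ j) u v")
  case True
  then have "(E ^^ (LEAST j. (E ^^ j) u v)) u v" by (rule LeastI_ex)
  then have "k \<le> (LEAST j. (E ^^ j) u v)" using assms not_le by blast
  then show ?thesis using True unfolding gdist_def by simp
qed (simp add: gdist_def)

lemma gdiam_eqI:
  assumes "\<And>u v. u \<in> V \<Longrightarrow> v \<in> V \<Longrightarrow> \<exists>k\<le>D. (E ^^ k) u v"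
    and "u0 \<in> V" "v0 \<in> V" "\<And>k. k < D \<Longrightarrow> \<not> (E ^^ k) u0 v0"
  shows "gdiam V E = enat D"
proof (rule antisym)
  show "gdiam V E \<le> enat D" unfolding gdiam_def
  proof (rule SUP_least)
    fix p assume "p \<in> V \<times> V"
    then obtain k where "k \<le> D" "(E ^^ k) (fst p) (snd p)" using assms(1) by force
    then show "gdist E (fst p) (snd p) \<le> enat D"
      using gdist_le[where E=E and k=k] by (meson enat_ord_simps(1) order_trans)
  qed
  show "enat D \<le> gdiam V E" unfolding gdiam_def
    using gdist_ge[OF assms(4)] assms(2,3) by (auto intro: SUP_upper2[where i="(u0, v0)"])
qed

lemma relpowp_involution_iff:
  assumes "\<And>u v. E u v \<Longrightarrow> u \<in> V \<and> v \<in> V" and "\<And>u v. E' u v \<Longrightarrow> u \<in> V \<and> v \<in> V"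
    and f_V: "\<And>u. u \<in> V \<Longrightarrow> f u \<in> V" and f_f: "\<And>u. u \<in> V \<Longrightarrow> f (f u) = u"
    and adj: "\<And>u v. u \<in> V \<Longrightarrow> v \<in> V \<Longrightarrow> E u v \<longleftrightarrow> E' (f u) (f v)"
    and "u \<in> V" "v \<in> V"
  shows "(E ^^ k) u v \<longleftrightarrow> (E' ^^ k) (f u) (f v)"
  using \<open>v \<in> V\<close>
proof (induction k arbitrary: v)
  case 0
  then show ?case using f_f \<open>u \<in> V\<close> by (metis relpowp.simps(1))
next
  case (Suc k)
  show ?case
  proof
    assume "(E ^^ Suc k) u v"
    then obtain w where "(E ^^ k) u w" "E w v" by (rule relpowp_Suc_E)
    moreover have "w \<in> V" using \<open>E w v\<close> assms(1) by blast
    ultimately show "(E' ^^ Suc k) (f u) (f v)"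
      using Suc adj by (blast intro: relpowp_Suc_I)
  next
    assume "(E' ^^ Suc k) (f u) (f v)"
    then obtain w where w: "(E' ^^ k) (f u) w" "E' w (f v)" by (rule relpowp_Suc_E)
    then have "w \<in> V" using assms(2) by blast
    then have "f w \<in> V" "f (f w) = w" using f_V f_f by auto
    then show "(E ^^ Suc k) u v"
      using Suc adj w by (metis relpowp_Suc_I)
  qed
qed

lemma gdiam_involution_invariant:
  assumes "\<And>u v. E u v \<Longrightarrow> u \<in> V \<and> v \<in> V" and "\<And>u v. E' u v \<Longrightarrow> u \<in> V \<and> v \<in> V"
    and f_V: "\<And>u. u \<in> V \<Longrightarrow> f u \<in> V" and f_f: "\<And>u. u \<in> V \<Longrightarrow> f (f u) = u"
    and "\<And>u v. u \<in> V \<Longrightarrow> v \<in> V \<Longrightarrow> E u v \<longleftrightarrow> E' (f u) (f v)"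
  shows "gdiam V E = gdiam V E'"
proof -
  have "gdist E u v = gdist E' (f u) (f v)" if "u \<in> V" "v \<in> V" for u v
    unfolding gdist_def using relpowp_involution_iff[where E=E and E'=E' and f=f and V=V, OF assms that] by simp
  then have "gdiam V E = (SUP p\<in>map_prod f f ` (V \<times> V). gdist E' (fst p) (snd p))"
    unfolding gdiam_def image_image by (intro SUP_cong) auto
  also have "f ` V = V"
    using f_V f_f by (metis image_subset_iff subsetI subset_antisym image_eqI)
  then have "map_prod f f ` (V \<times> V) = V \<times> V"
    by (simp add: map_prod_surj_on)
  finally show ?thesis unfolding gdiam_def .
qed

lemma symdiff_empty [simp]: "symdiff a {} = a" "symdiff {} a = a"
  unfolding symdiff_def by auto

lemma symdiff_self [simp]: "symdiff a a = {}"
  unfolding symdiff_def by auto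

lemma symdiff_cancel [simp]: "symdiff a (symdiff a b) = b"
  unfolding symdiff_def by auto

lemma symdiff_empty_iff: "symdiff a b = {} \<longleftrightarrow> b = a"
  unfolding symdiff_def by auto

lemma symdiff_eq_iff: "symdiff a b = c \<longleftrightarrow> b = symdiff a c"
  by (metis symdiff_cancel)

lemma symdiff_assoc: "symdiff (symdiff a b) c = symdiff a (symdiff b c)"
  unfolding symdiff_def by auto

lemma symdiff_subset: "a \<subseteq> X \<Longrightarrow> b \<subseteq> X \<Longrightarrow> symdiff a b \<subseteq> X"
  unfolding symdiff_def by auto

lemma symdiff_singleton_neq: "symdiff a {c} \<noteq> a"
  unfolding symdiff_def by auto

lemma card_symdiff_singleton_le: "finite a \<Longrightarrow> card (symdiff a {c}) \<le> card a + 1"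
  by (rule order_trans[OF card_mono[of "insert c a"]]) (auto simp: symdiff_def card_insert_if)

section \<open>The graph \<open>Q\<^sub>N(d,r)\<close> for arbitrary \<open>N\<close> and \<open>r\<close>\<close>

definition flip_window :: "nat \<Rightarrow> nat \<Rightarrow> nat \<Rightarrow> nat set" where
  "flip_window N d x = (\<lambda>i. (i + d * x + N - 1) mod N) ` {1..d}"

lemma Qadj_iff:
  "Qadj N d r u v \<longleftrightarrow> u \<in> Qverts N r \<and> v \<in> Qverts N r \<and> u \<noteq> v \<and>
     ((snd v = snd u \<and> (\<exists>c\<in>flip_window N d (snd u). fst v = symdiff (fst u) {c})) \<or>
      (fst v = fst u \<and> (snd v = (snd u + 1) mod r \<or> snd v = (snd u + r - 1) mod r)))"
  unfolding Qadj_def flip_window_def unitv_def by (auto simp: add.assoc)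

lemma flip_window_subset: "N > 0 \<Longrightarrow> flip_window N d x \<subseteq> {0..<N}"
  unfolding flip_window_def by auto

lemma finite_flip_window [simp]: "finite (flip_window N d x)"
  unfolding flip_window_def by auto

lemma card_flip_window_le: "card (flip_window N d x) \<le> d"
  unfolding flip_window_def using card_image_le[of "{1..d}"] by fastforce

text \<open>Ring positions are tracked by their integer displacement \<open>t\<close> from the start \<open>x\<close>;
  \<open>ring_pos r x t\<close> is the position actually reached.\<close>

definition ring_pos :: "nat \<Rightarrow> nat \<Rightarrow> int \<Rightarrow> nat" where
  "ring_pos r x t = nat ((int x + t) mod int r)"

lemma ring_pos_less: "r > 0 \<Longrightarrow> ring_pos r x t < r"
  unfolding ring_pos_def by (simp add: nat_less_iff)

lemma ring_pos_0: "x < r \<Longrightarrow> ring_pos r x 0 = x"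
  unfolding ring_pos_def by simp

lemma of_nat_ring_pos: "r > 0 \<Longrightarrow> int (ring_pos r x t) = (int x + t) mod int r"
  unfolding ring_pos_def by simp

lemma ring_pos_succ:
  assumes "r > 0"
  shows "ring_pos r x (t + 1) = (ring_pos r x t + 1) mod r"
proof -
  have "int (ring_pos r x (t + 1)) = ((int x + t) mod int r + 1) mod int r"
    using of_nat_ring_pos[OF assms] by (simp add: mod_add_left_eq add.assoc)
  also have "\<dots> = int ((ring_pos r x t + 1) mod r)"
    using of_nat_ring_pos[OF assms] by (simp add: of_nat_mod add.commute)
  finally show ?thesis by simp
qed

lemma ring_pos_pred:
  assumes "r > 0"
  shows "ring_pos r x (t - 1) = (ring_pos r x t + r - 1) mod r"
proof -
  have "int (ring_pos r x (t - 1)) = ((int x + t) mod int r + int r - 1) mod int r"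
    using of_nat_ring_pos[OF assms]
    by (metis (no_types, opaque_lifting) add_diff_eq mod_add_left_eq mod_add_self2 diff_add_eq)
  also have "\<dots> = int ((ring_pos r x t + r - 1) mod r)"
    using of_nat_ring_pos[OF assms] assms by (simp add: of_nat_mod of_nat_diff)
  finally show ?thesis by simp
qed

lemma ring_pos_eq_iff_mod:
  assumes "r > 0" "y < r"
  shows "ring_pos r x e = y \<longleftrightarrow> e mod int r = (int y - int x) mod int r"
proof -
  have "ring_pos r x e = y \<longleftrightarrow> int (ring_pos r x e) = int y"
    by (rule of_nat_eq_iff[symmetric])
  also have "\<dots> \<longleftrightarrow> (int x + e) mod int r = int y mod int r"
    using of_nat_ring_pos[OF assms(1)] assms(2) by simp
  also have "\<dots> \<longleftrightarrow> e mod int r = (int y - int x) mod int r"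
    by (simp add: mod_eq_dvd_iff algebra_simps)
  finally show ?thesis .
qed

text \<open>A walk of the ring coordinate, recorded by its displacements, stays in some interval
  \<open>[lo, hi] \<ni> 0\<close> and ends at \<open>e\<close>. It has to visit both ends of the interval, so it needs
  at least \<open>excursion_len lo hi e\<close> steps, and this many suffice.\<close>

definition excursion :: "int \<Rightarrow> int \<Rightarrow> int \<Rightarrow> bool" where
  "excursion lo hi e \<longleftrightarrow> lo \<le> 0 \<and> 0 \<le> hi \<and> lo \<le> e \<and> e \<le> hi"

definition excursion_len :: "int \<Rightarrow> int \<Rightarrow> int \<Rightarrow> int" where
  "excursion_len lo hi e = 2 * (hi - lo) - \<bar>e\<bar>"

lemma excursion_step_up:
  "excursion lo hi e \<Longrightarrow> excursion lo (max hi (e + 1)) (e + 1) \<and>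
     excursion_len lo (max hi (e + 1)) (e + 1) \<le> excursion_len lo hi e + 1"
  unfolding excursion_def excursion_len_def by arith

lemma excursion_step_down:
  "excursion lo hi e \<Longrightarrow> excursion (min lo (e - 1)) hi (e - 1) \<and>
     excursion_len (min lo (e - 1)) hi (e - 1) \<le> excursion_len lo hi e + 1"
  unfolding excursion_def excursion_len_def by arith

definition swept :: "nat \<Rightarrow> nat \<Rightarrow> nat \<Rightarrow> nat \<Rightarrow> int \<Rightarrow> int \<Rightarrow> nat set" where
  "swept N r d x lo hi = (\<Union>t\<in>{lo..hi}. flip_window N d (ring_pos r x t))"

lemma finite_swept [simp]: "finite (swept N r d x lo hi)"
  unfolding swept_def by simp

lemma swept_mono: "lo' \<le> lo \<Longrightarrow> hi \<le> hi' \<Longrightarrow> swept N r d x lo hi \<subseteq> swept N r d x lo' hi'"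
  unfolding swept_def by (intro UN_mono) auto

text \<open>Every flipped coordinate was flipped while the ring coordinate was in the swept
  interval, and each flip costs one step on top of the ring moves.\<close>

lemma walk_excursion_bound_step:
  assumes adj: "Qadj N d r w v" and r: "r > 0" and exc: "excursion lo hi e"
    and pos: "snd w = ring_pos r x0 e" and cov: "symdiff a0 (fst w) \<subseteq> swept N r d x0 lo hi"
  shows "\<exists>lo' hi' e'. excursion lo' hi' e' \<and> snd v = ring_pos r x0 e' \<and>
    symdiff a0 (fst v) \<subseteq> swept N r d x0 lo' hi' \<and>
    int (card (symdiff a0 (fst v))) + excursion_len lo' hi' e' \<le>
      int (card (symdiff a0 (fst w))) + excursion_len lo hi e + 1"
proof -
  from adj consider (flip) c where "snd v = snd w" "c \<in> flip_window N d (snd w)" "fst v = symdiff (fst w) {c}"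
    | (up) "fst v = fst w" "snd v = (snd w + 1) mod r"
    | (down) "fst v = fst w" "snd v = (snd w + r - 1) mod r"
    unfolding Qadj_iff by blast
  then show ?thesis
  proof cases
    case flip
    have sd: "symdiff a0 (fst v) = symdiff (symdiff a0 (fst w)) {c}"
      using flip by (simp add: symdiff_assoc)
    have "c \<in> swept N r d x0 lo hi"
      using flip pos exc unfolding swept_def excursion_def by auto
    then have "symdiff a0 (fst v) \<subseteq> swept N r d x0 lo hi"
      using cov unfolding sd by (auto simp: symdiff_def)
    moreover have "card (symdiff a0 (fst v)) \<le> card (symdiff a0 (fst w)) + 1"
      unfolding sd by (rule card_symdiff_singleton_le[OF finite_subset[OF cov finite_swept]])
    ultimately show ?thesis using exc pos flip(1) by force
  next
    case up
    have "snd v = ring_pos r x0 (e + 1)" using up pos ring_pos_succ[OF r] by simp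
    moreover have "symdiff a0 (fst v) \<subseteq> swept N r d x0 lo (max hi (e + 1))"
      using up cov swept_mono[of lo lo hi "max hi (e + 1)" N r d x0] by auto
    ultimately show ?thesis using excursion_step_up[OF exc] up(1) by force
  next
    case down
    have "snd v = ring_pos r x0 (e - 1)" using down pos ring_pos_pred[OF r] by simp
    moreover have "symdiff a0 (fst v) \<subseteq> swept N r d x0 (min lo (e - 1)) hi"
      using down cov swept_mono[of "min lo (e - 1)" lo hi hi N r d x0] by auto
    ultimately show ?thesis using excursion_step_down[OF exc] down(1) by force
  qed
qed

lemma walk_excursion_bound:
  assumes "(Qadj N d r ^^ k) (a0, x0) v" and "x0 < r"
  shows "\<exists>lo hi e. excursion lo hi e \<and> snd v = ring_pos r x0 e \<and>
    symdiff a0 (fst v) \<subseteq> swept N r d x0 lo hi \<and>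
    int (card (symdiff a0 (fst v))) + excursion_len lo hi e \<le> int k"
  using assms(1)
proof (induction k arbitrary: v)
  case 0
  then show ?case
    using ring_pos_0[OF assms(2)] by (intro exI[of _ 0]) (auto simp: excursion_def excursion_len_def)
next
  case (Suc k)
  from Suc.prems obtain w where w: "(Qadj N d r ^^ k) (a0, x0) w" and wv: "Qadj N d r w v"
    by (rule relpowp_Suc_E)
  have r: "r > 0" using assms(2) by simp
  from Suc.IH[OF w] obtain lo hi e where exc: "excursion lo hi e" and pos: "snd w = ring_pos r x0 e"
    and cov: "symdiff a0 (fst w) \<subseteq> swept N r d x0 lo hi"
    and len: "int (card (symdiff a0 (fst w))) + excursion_len lo hi e \<le> int k"
    by blast
  from walk_excursion_bound_step[OF wv r exc pos cov] obtain lo' hi' e' where "excursion lo' hi' e'"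
    "snd v = ring_pos r x0 e'" "symdiff a0 (fst v) \<subseteq> swept N r d x0 lo' hi'"
    "int (card (symdiff a0 (fst v))) + excursion_len lo' hi' e' \<le>
      int (card (symdiff a0 (fst w))) + excursion_len lo hi e + 1"
    by blast
  with len show ?case by force
qed

lemma swept_subset: "N > 0 \<Longrightarrow> swept N r d x lo hi \<subseteq> {0..<N}"
  unfolding swept_def using flip_window_subset by blast

lemma flips_walk:
  assumes "F \<subseteq> flip_window N d x" "x < r" "a \<subseteq> {0..<N}" "N > 0"
  shows "(Qadj N d r ^^ card F) (a, x) (symdiff a F, x)"
proof -
  have "finite F" using assms(1) by (rule finite_subset) simp
  from this assms(1) show ?thesis
  proof (induction F rule: finite_induct)
    case (insert c F)
    have c: "c \<in> flip_window N d x" and F: "F \<subseteq> {0..<N}" and "{c} \<subseteq> {0..<N}"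
      using insert(4) flip_window_subset[OF assms(4), of d x] by auto
    have aF: "symdiff a F \<subseteq> {0..<N}" using assms(3) F by (rule symdiff_subset)
    then have "symdiff (symdiff a F) {c} \<subseteq> {0..<N}" using \<open>{c} \<subseteq> {0..<N}\<close> by (rule symdiff_subset)
    then have "(symdiff a F, x) \<in> Qverts N r" "(symdiff (symdiff a F) {c}, x) \<in> Qverts N r"
      using aF assms(2) by (auto simp: Qverts_def)
    moreover have "(symdiff a F, x) \<noteq> (symdiff (symdiff a F) {c}, x)"
      by (metis symdiff_singleton_neq prod.inject)
    ultimately have "Qadj N d r (symdiff a F, x) (symdiff (symdiff a F) {c}, x)"
      unfolding Qadj_iff fst_conv snd_conv using c
      by (intro conjI disjI1 refl bexI[of _ c]) simp_all
    with insert.IH insert.prems have "(Qadj N d r ^^ Suc (card F)) (a, x) (symdiff (symdiff a F) {c}, x)"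
      by (blast intro: relpowp_Suc_I)
    moreover have "symdiff (symdiff a F) {c} = symdiff a (insert c F)"
      using insert(2) unfolding symdiff_def by auto
    ultimately show ?case using insert(1,2) by simp
  qed simp
qed

lemma mod_succ_neq: "2 \<le> r \<Longrightarrow> p < r \<Longrightarrow> (p + 1) mod r \<noteq> (p::nat)"
  by (cases "p + 1 = r") auto

lemma mod_pred_neq: "2 \<le> r \<Longrightarrow> p < r \<Longrightarrow> (p + r - 1) mod r \<noteq> (p::nat)"
  by (cases p) auto

lemma ring_step:
  assumes "2 \<le> r" "a \<subseteq> {0..<N}" "s = 1 \<or> s = -1"
  shows "Qadj N d r (a, ring_pos r x t) (a, ring_pos r x (t + s))"
proof -
  have r0: "r > 0" using assms(1) by simp
  define p q where "p = ring_pos r x t" and "q = ring_pos r x (t + s)"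
  have pq: "p < r" "q < r" unfolding p_def q_def using ring_pos_less[OF r0] by auto
  have "q \<noteq> p \<and> (q = (p + 1) mod r \<or> q = (p + r - 1) mod r)"
    using assms(3) mod_succ_neq[OF assms(1) pq(1)] mod_pred_neq[OF assms(1) pq(1)]
    unfolding p_def q_def by (auto simp: ring_pos_succ[OF r0] ring_pos_pred[OF r0])
  then show ?thesis
    unfolding Qadj_iff p_def[symmetric] q_def[symmetric] fst_conv snd_conv
    using assms(2) pq by (auto simp: Qverts_def)
qed

lemma sweep_walk:
  assumes "2 \<le> r" "N > 0" "s = 1 \<or> s = -1" "a \<subseteq> {0..<N}"
    and "S \<subseteq> (\<Union>t\<in>{0..int j}. flip_window N d (ring_pos r x (z + s * t)))"
  shows "(Qadj N d r ^^ (card S + j)) (a, ring_pos r x z) (symdiff a S, ring_pos r x (z + s * int j))"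
  using assms(5)
proof (induction j arbitrary: S)
  case 0
  then show ?case using flips_walk[of S N d "ring_pos r x z" r a] ring_pos_less[of r x z] assms by simp
next
  case (Suc j)
  define U where "U = (\<Union>t\<in>{0..int j}. flip_window N d (ring_pos r x (z + s * t)))"
  define S1 where "S1 = S \<inter> U"
  define S2 where "S2 = S - U"
  have "{0..int (Suc j)} = insert (1 + int j) {0..int j}" by auto
  then have S2: "S2 \<subseteq> flip_window N d (ring_pos r x (z + s * int (Suc j)))"
    using Suc.prems unfolding S2_def U_def by (auto simp: algebra_simps)
  have S_sub: "S \<subseteq> {0..<N}" using Suc.prems flip_window_subset[OF assms(2)] by blast
  then have a1: "symdiff a S1 \<subseteq> {0..<N}" using assms(4) unfolding S1_def by (intro symdiff_subset) auto
  have "(Qadj N d r ^^ (card S1 + j)) (a, ring_pos r x z) (symdiff a S1, ring_pos r x (z + s * int j))"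
    using Suc.IH unfolding S1_def U_def by blast
  moreover have "Qadj N d r (symdiff a S1, ring_pos r x (z + s * int j))
      (symdiff a S1, ring_pos r x (z + s * int (Suc j)))"
    using ring_step[OF assms(1) a1 assms(3), of d x "z + s * int j"] by (simp add: algebra_simps)
  ultimately have "(Qadj N d r ^^ Suc (card S1 + j)) (a, ring_pos r x z)
      (symdiff a S1, ring_pos r x (z + s * int (Suc j)))"
    by (rule relpowp_Suc_I)
  moreover have "(Qadj N d r ^^ card S2) (symdiff a S1, ring_pos r x (z + s * int (Suc j)))
      (symdiff (symdiff a S1) S2, ring_pos r x (z + s * int (Suc j)))"
    using flips_walk[OF S2 ring_pos_less a1 assms(2)] assms(1) by simp
  ultimately have "(Qadj N d r ^^ (Suc (card S1 + j) + card S2)) (a, ring_pos r x z)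
      (symdiff (symdiff a S1) S2, ring_pos r x (z + s * int (Suc j)))"
    by (rule relpowp_trans)
  moreover have "symdiff (symdiff a S1) S2 = symdiff a S"
    unfolding S1_def S2_def symdiff_def by auto
  moreover have "card S = card S1 + card S2"
    unfolding S1_def S2_def using finite_subset[OF S_sub]
    by (subst card_Un_disjoint[symmetric]) (auto intro: arg_cong[where f = card])
  ultimately show ?case by (simp add: add.commute add.left_commute)
qed

lemma swept_subset_sweep_up:
  "swept N r d x lo hi \<subseteq> (\<Union>t\<in>{0..int (nat (hi - lo))}. flip_window N d (ring_pos r x (lo + 1 * t)))"
  unfolding swept_def by (auto intro!: bexI[of _ "t - lo" for t])

lemma swept_subset_sweep_down:
  "swept N r d x lo hi \<subseteq> (\<Union>t\<in>{0..int (nat (hi - lo))}. flip_window N d (ring_pos r x (hi + (-1) * t)))"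
  unfolding swept_def by (auto intro!: bexI[of _ "hi - t" for t])

text \<open>For \<open>e \<ge> 0\<close>: go down to \<open>lo\<close>, sweep up to \<open>hi\<close> flipping \<open>S\<close>, and come back down to \<open>e\<close>;
  symmetrically for \<open>e < 0\<close>.\<close>

lemma excursion_walk:
  assumes r: "2 \<le> r" and N: "N > 0" and a: "a \<subseteq> {0..<N}" and x: "x < r"
    and exc: "excursion lo hi e" and S: "S \<subseteq> swept N r d x lo hi"
  shows "\<exists>k. int k \<le> int (card S) + excursion_len lo hi e \<and>
    (Qadj N d r ^^ k) (a, x) (symdiff a S, ring_pos r x e)"
proof -
  have "S \<subseteq> {0..<N}" using S swept_subset[OF N] by (rule subset_trans)
  with a have aS: "symdiff a S \<subseteq> {0..<N}" by (rule symdiff_subset)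
  note sweep = sweep_walk[OF r N _ a] sweep_walk[OF r N _ aS, where S = "{}"]
  note lohi = exc[unfolded excursion_def]
  show ?thesis
  proof (cases "e \<ge> 0")
    case True
    have "(Qadj N d r ^^ nat (- lo)) (a, x) (a, ring_pos r x lo)"
      using sweep(1)[where s = "-1" and S = "{}" and j = "nat (- lo)" and z = 0 and x = x] lohi
      by (simp add: ring_pos_0[OF x])
    moreover have "(Qadj N d r ^^ (card S + nat (hi - lo))) (a, ring_pos r x lo) (symdiff a S, ring_pos r x hi)"
      using sweep(1)[where s = 1 and j = "nat (hi - lo)" and z = lo and x = x,
          OF _ subset_trans[OF S swept_subset_sweep_up]] lohi by simp
    moreover have "(Qadj N d r ^^ nat (hi - e)) (symdiff a S, ring_pos r x hi) (symdiff a S, ring_pos r x e)"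
      using sweep(2)[where s = "-1" and j = "nat (hi - e)" and z = hi and x = x] lohi by simp
    ultimately have "(Qadj N d r ^^ (nat (- lo) + (card S + nat (hi - lo)) + nat (hi - e)))
        (a, x) (symdiff a S, ring_pos r x e)"
      by (blast intro: relpowp_trans)
    then show ?thesis using lohi True unfolding excursion_len_def by (intro exI) auto
  next
    case False
    have "(Qadj N d r ^^ nat hi) (a, x) (a, ring_pos r x hi)"
      using sweep(1)[where s = 1 and S = "{}" and j = "nat hi" and z = 0 and x = x] lohi
      by (simp add: ring_pos_0[OF x])
    moreover have "(Qadj N d r ^^ (card S + nat (hi - lo))) (a, ring_pos r x hi) (symdiff a S, ring_pos r x lo)"
      using sweep(1)[where s = "-1" and j = "nat (hi - lo)" and z = hi and x = x,
          OF _ subset_trans[OF S swept_subset_sweep_down]] lohi by simp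
    moreover have "(Qadj N d r ^^ nat (e - lo)) (symdiff a S, ring_pos r x lo) (symdiff a S, ring_pos r x e)"
      using sweep(2)[where s = 1 and j = "nat (e - lo)" and z = lo and x = x] lohi by simp
    ultimately have "(Qadj N d r ^^ (nat hi + (card S + nat (hi - lo)) + nat (e - lo)))
        (a, x) (symdiff a S, ring_pos r x e)"
      by (blast intro: relpowp_trans)
    then show ?thesis using lohi False unfolding excursion_len_def by (intro exI) auto
  qed
qed

text \<open>The extremal pair of vertices is \<open>({}, x0)\<close> and \<open>({0..<N}, y0)\<close>.\<close>

lemma Qdiam_eqI:
  assumes r: "2 \<le> r" and N: "N > 0"
    and upper: "\<And>x y. x < r \<Longrightarrow> y < r \<Longrightarrow> \<exists>lo hi e. excursion lo hi e \<and> ring_pos r x e = y \<and>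
       {0..<N} \<subseteq> swept N r d x lo hi \<and> excursion_len lo hi e \<le> int M"
    and x0: "x0 < r" and y0: "y0 < r"
    and lower: "\<And>lo hi e. excursion lo hi e \<Longrightarrow> ring_pos r x0 e = y0 \<Longrightarrow>
       {0..<N} \<subseteq> swept N r d x0 lo hi \<Longrightarrow> int M \<le> excursion_len lo hi e"
  shows "gdiam (Qverts N r) (Qadj N d r) = enat (N + M)"
proof (rule gdiam_eqI)
  fix u v assume "u \<in> Qverts N r" "v \<in> Qverts N r"
  then obtain a x b y where uv: "u = (a, x)" "v = (b, y)" "a \<subseteq> {0..<N}" "x < r" "b \<subseteq> {0..<N}" "y < r"
    by (auto simp: Qverts_def)
  from upper[OF uv(4,6)] obtain lo hi e where exc: "excursion lo hi e" "ring_pos r x e = y"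
    "{0..<N} \<subseteq> swept N r d x lo hi" "excursion_len lo hi e \<le> int M" by blast
  have S: "symdiff a b \<subseteq> {0..<N}" using uv by (intro symdiff_subset)
  from excursion_walk[OF r N uv(3,4) exc(1) subset_trans[OF S exc(3)]]
  obtain k where "int k \<le> int (card (symdiff a b)) + excursion_len lo hi e"
    "(Qadj N d r ^^ k) (a, x) (b, y)" using exc(2) by auto
  moreover have "card (symdiff a b) \<le> N" using card_mono[OF _ S] by simp
  ultimately show "\<exists>k\<le>N + M. (Qadj N d r ^^ k) u v" using exc(4) uv by (intro exI[of _ k]) auto
next
  show "({}, x0) \<in> Qverts N r" "({0..<N}, y0) \<in> Qverts N r" using x0 y0 by (auto simp: Qverts_def)
  fix k assume "k < N + M"
  show "\<not> (Qadj N d r ^^ k) ({}, x0) ({0..<N}, y0)"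
  proof
    assume "(Qadj N d r ^^ k) ({}, x0) ({0..<N}, y0)"
    from walk_excursion_bound[OF this x0] obtain lo hi e where "excursion lo hi e" "y0 = ring_pos r x0 e"
      "{0..<N} \<subseteq> swept N r d x0 lo hi" "int N + excursion_len lo hi e \<le> int k"
      by auto
    with lower \<open>k < N + M\<close> show False by fastforce
  qed
qed

text \<open>Since \<open>N\<close> divides \<open>d r\<close>, the window of a ring position can be computed from the
  integer displacement without reducing modulo \<open>r\<close>: consecutive displacements have consecutive
  blocks of \<open>d\<close> coordinates, also across the wrap-around of the ring.\<close>

lemma flip_window_ring_pos:
  assumes N: "N > 0" and r: "r > 0" and dvd: "N dvd d * r"
  shows "flip_window N d (ring_pos r x t) = (\<lambda>j. nat ((int d * (int x + t) + int j) mod int N)) ` {..<d}"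
proof -
  obtain L where L: "int d * int r = int N * int L" using dvd by (metis dvdE of_nat_mult)
  define K where "K = (int x + t) div int r"
  have p: "int (ring_pos r x t) = int x + t - int r * K"
    unfolding K_def of_nat_ring_pos[OF r] by (simp add: minus_div_mult_eq_mod[symmetric])
  have "int d * int (ring_pos r x t) = int d * (int x + t) - (int d * int r) * K"
    unfolding p by (simp add: algebra_simps)
  then have dp: "int d * int (ring_pos r x t) = int d * (int x + t) - int N * (int L * K)"
    unfolding L by (simp add: mult.assoc)
  have "(Suc j + d * ring_pos r x t + N - 1) mod N = nat ((int d * (int x + t) + int j) mod int N)" for j
  proof -
    have "int ((Suc j + d * ring_pos r x t + N - 1) mod N) =
        (int j + int d * int (ring_pos r x t) + int N * 1) mod int N"
      using N by (simp add: of_nat_mod of_nat_diff algebra_simps)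
    also have "\<dots> = (int d * (int x + t) + int j + int N * (1 - int L * K)) mod int N"
      by (simp add: dp algebra_simps)
    also have "\<dots> = (int d * (int x + t) + int j) mod int N" by (simp only: mod_mult_self2)
    finally show ?thesis by (metis nat_int)
  qed
  then show ?thesis
    unfolding flip_window_def image_Suc_lessThan[symmetric] image_image by simp
qed

lemma swept_covers:
  assumes N: "N > 0" and r: "r > 0" and dvd: "N dvd d * r"
    and long: "int N \<le> int d * (hi - lo + 1)"
  shows "{0..<N} \<subseteq> swept N r d x lo hi"
proof
  fix b assume "b \<in> {0..<N}"
  have d: "d > 0" using long N by (cases d) auto
  define m where "m = (int b - int d * (int x + lo)) mod int N"
  define q j where "q = m div int d" and "j = m mod int d"
  have m: "0 \<le> m" "m < int N" unfolding m_def using N by auto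
  have mqj: "m = int d * q + j" unfolding q_def j_def by simp
  have j: "0 \<le> j" "j < int d" unfolding j_def using d by auto
  have q: "0 \<le> q" unfolding q_def using m d by (simp add: pos_imp_zdiv_nonneg_iff)
  have "q \<le> hi - lo"
  proof (rule ccontr)
    assume "\<not> q \<le> hi - lo"
    then have "int d * (hi - lo + 1) \<le> int d * q" by (intro mult_left_mono) auto
    then show False using mqj j m long by linarith
  qed
  have "int d * (int x + (lo + q)) + int (nat j) = int d * (int x + lo) + m"
    using mqj j by (simp add: algebra_simps)
  then have "b = nat ((int d * (int x + (lo + q)) + int (nat j)) mod int N)"
    unfolding m_def using \<open>b \<in> {0..<N}\<close> by (simp add: mod_add_right_eq)
  then have "b \<in> flip_window N d (ring_pos r x (lo + q))"
    unfolding flip_window_ring_pos[OF N r dvd] by (rule image_eqI[where x = "nat j"]) (use j in auto)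
  moreover have "lo + q \<in> {lo..hi}" using q \<open>q \<le> hi - lo\<close> by simp
  ultimately show "b \<in> swept N r d x lo hi" unfolding swept_def by blast
qed

lemma covers_imp_long:
  assumes "{0..<N} \<subseteq> swept N r d x lo hi" and "lo \<le> hi"
  shows "int N \<le> int d * (hi - lo + 1)"
proof -
  have "N \<le> card (swept N r d x lo hi)" using card_mono[OF finite_swept assms(1)] by simp
  also have "\<dots> \<le> (\<Sum>t\<in>{lo..hi}. card (flip_window N d (ring_pos r x t)))"
    unfolding swept_def by (rule card_UN_le) simp
  also have "\<dots> \<le> (\<Sum>t\<in>{lo..hi}. d)" by (intro sum_mono card_flip_window_le)
  finally have "N \<le> d * nat (hi - lo + 1)" by (simp add: mult.commute)
  then have "int N \<le> int d * int (nat (hi - lo + 1))" by (metis of_nat_le_iff of_nat_mult)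
  then show ?thesis using assms(2) by simp
qed

lemma Qdiam_eq_arith:
  assumes r: "2 \<le> r" and N: "N > 0" and dvd: "N dvd d * r"
    and upper: "\<And>k. 0 \<le> k \<Longrightarrow> k < int r \<Longrightarrow> \<exists>lo hi e. excursion lo hi e \<and> e mod int r = k \<and>
       int N \<le> int d * (hi - lo + 1) \<and> excursion_len lo hi e \<le> int M"
    and k_far: "0 \<le> k_far" "k_far < int r"
    and lower: "\<And>lo hi e. excursion lo hi e \<Longrightarrow> e mod int r = k_far \<Longrightarrow>
       int N \<le> int d * (hi - lo + 1) \<Longrightarrow> int M \<le> excursion_len lo hi e"
  shows "gdiam (Qverts N r) (Qadj N d r) = enat (N + M)"
proof (rule Qdiam_eqI[OF r N _ _ _ lower])
  have r0: "r > 0" using r by simp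
  fix x y assume "x < r" "y < r"
  obtain lo hi e where "excursion lo hi e" "e mod int r = (int y - int x) mod int r"
    "int N \<le> int d * (hi - lo + 1)" "excursion_len lo hi e \<le> int M"
    using upper[of "(int y - int x) mod int r"] r0 by auto
  then show "\<exists>lo hi e. excursion lo hi e \<and> ring_pos r x e = y \<and>
      {0..<N} \<subseteq> swept N r d x lo hi \<and> excursion_len lo hi e \<le> int M"
    using ring_pos_eq_iff_mod[OF r0 \<open>y < r\<close>] swept_covers[OF N r0 dvd] by blast
next
  show "0 < r" "nat k_far < r" using r k_far by auto
  fix lo hi e assume "excursion lo hi e" "ring_pos r 0 e = nat k_far" "{0..<N} \<subseteq> swept N r d 0 lo hi"
  then show "e mod int r = k_far" "int N \<le> int d * (hi - lo + 1)"
    using ring_pos_eq_iff_mod[of r "nat k_far" 0 e] k_far covers_imp_long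
    by (auto simp: excursion_def)
qed

section \<open>Excursions on a cycle\<close>

lemma int_mod_cases:
  fixes e k r :: int
  assumes "r > 0" "e mod r = k"
  shows "e = k \<or> e = k - r \<or> k + r \<le> e \<or> e \<le> k - 2 * r"
proof -
  have e: "e = k + r * (e div r)" by (metis assms(2) add.commute div_mult_mod_eq mult.commute)
  consider "e div r = 0" | "e div r = -1" | "e div r \<ge> 1" | "e div r \<le> -2" by linarith
  then show ?thesis
  proof cases
    case 3
    then have "r * 1 \<le> r * (e div r)" using assms(1) by (intro mult_left_mono) auto
    then show ?thesis using e by linarith
  next
    case 4
    then have "r * (e div r) \<le> r * (-2)" using assms(1) by (intro mult_left_mono) auto
    then show ?thesis using e by linarith
  qed (use e in auto)
qed

lemma abs_le_excursion_len: "excursion lo hi e \<Longrightarrow> \<bar>e\<bar> \<le> excursion_len lo hi e"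
  unfolding excursion_def excursion_len_def by arith

text \<open>Walk the short way round, extending the interval behind the start if fewer than \<open>c\<close>
  positions are visited.\<close>

lemma cycle_excursion_short:
  fixes n c :: nat and k :: int
  assumes "0 \<le> k" "k < int n" "1 \<le> c"
  shows "\<exists>lo hi e. excursion lo hi e \<and> e mod int n = k \<and> int c \<le> hi - lo + 1 \<and>
    excursion_len lo hi e \<le> max (int (n div 2)) (2 * int c - 2)"
proof (cases "k \<le> int (n div 2)")
  case True
  define lo where "lo = min 0 (k - (int c - 1))"
  have "excursion lo k k \<and> k mod int n = k \<and> int c \<le> k - lo + 1 \<and>
      excursion_len lo k k \<le> max (int (n div 2)) (2 * int c - 2)"
    using assms True unfolding lo_def excursion_def excursion_len_def by (auto simp: min_def max_def)
  then show ?thesis by blast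
next
  case False
  define e hi where "e = k - int n" and "hi = max 0 (e + int c - 1)"
  have "e mod int n = k" unfolding e_def using assms by (simp add: mod_diff_right_eq[symmetric])
  moreover have "excursion e hi e \<and> int c \<le> hi - e + 1 \<and>
      excursion_len e hi e \<le> max (int (n div 2)) (2 * int c - 2)"
    using assms False unfolding e_def hi_def excursion_def excursion_len_def
    by (auto simp: max_def)
  ultimately show ?thesis by blast
qed

lemma cycle_excursion_half_lower:
  assumes "n > 0" "excursion lo hi e" "e mod int n = int (n div 2)"
  shows "int (n div 2) \<le> excursion_len lo hi e"
proof -
  have "int (n div 2) \<le> \<bar>e\<bar>" using int_mod_cases[OF _ assms(3)] assms(1) by auto
  then show ?thesis using abs_le_excursion_len[OF assms(2)] by linarith
qed

lemma cycle_excursion_span_lower: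
  assumes "n > 0" "excursion lo hi e" "e mod int n = 0" "c \<le> hi - lo + 1" "2 * c - 2 \<le> int n"
  shows "2 * c - 2 \<le> excursion_len lo hi e"
proof (cases "e = 0")
  case True
  then show ?thesis using assms(4) unfolding excursion_len_def by simp
next
  case False
  then have "int n \<le> \<bar>e\<bar>" using int_mod_cases[OF _ assms(3)] assms(1) by auto
  then show ?thesis using abs_le_excursion_len[OF assms(2)] assms(5) by linarith
qed

lemma ceiling_div_le_iff:
  fixes n d :: nat and z :: int
  assumes "d > 0" "z \<ge> 0"
  shows "int ((n + d - 1) div d) \<le> z \<longleftrightarrow> int n \<le> int d * z"
proof -
  obtain m where z: "z = int m" using assms(2) nonneg_int_cases by blast
  have "(n + d - 1) div d \<le> m \<longleftrightarrow> n + d - 1 < Suc m * d"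
    using div_less_iff_less_mult[OF assms(1)] by (metis less_Suc_eq_le)
  also have "\<dots> \<longleftrightarrow> n \<le> d * m" using assms(1) by (auto simp: algebra_simps)
  finally show ?thesis unfolding z of_nat_mult[symmetric] of_nat_le_iff .
qed

lemma ceiling_div_bounds:
  fixes n d :: nat
  assumes "2 \<le> d" "1 \<le> n"
  shows "1 \<le> (n + d - 1) div d" "2 * int ((n + d - 1) div d) - 2 \<le> int n"
proof -
  show "1 \<le> (n + d - 1) div d" using ceiling_div_le_iff[of d 0 n] assms by simp
  have "int n \<le> int d * ((int n + 1) div 2)"
    using assms(1) mult_right_mono[of 2 "int d" "(int n + 1) div 2"] by linarith
  then show "2 * int ((n + d - 1) div d) - 2 \<le> int n"
    using ceiling_div_le_iff[of d "(int n + 1) div 2" n] assms(1) by linarith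
qed

theorem Qdiam:
  assumes "2 \<le> d" "d \<le> n" "3 \<le> n"
  shows "gdiam (Qverts n n) (Qadj n d n) = enat (n + max (n div 2) (2 * ((n + d - 1) div d) - 2))"
proof -
  define c where "c = (n + d - 1) div d"
  define M where "M = max (n div 2) (2 * c - 2)"
  have c: "1 \<le> c" "2 * int c - 2 \<le> int n" using ceiling_div_bounds[of d n] assms unfolding c_def by auto
  have span: "int n \<le> int d * z \<longleftrightarrow> int c \<le> z" if "z \<ge> 0" for z
    using ceiling_div_le_iff[OF _ that] assms(1) unfolding c_def by simp
  have M: "int M = max (int (n div 2)) (2 * int c - 2)" unfolding M_def using c(1) by auto
  have upper: "\<exists>lo hi e. excursion lo hi e \<and> e mod int n = k \<and> int n \<le> int d * (hi - lo + 1) \<and>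
      excursion_len lo hi e \<le> int M" if k: "0 \<le> k" "k < int n" for k
  proof -
    obtain lo hi e where "excursion lo hi e" "e mod int n = k" "int c \<le> hi - lo + 1"
        "excursion_len lo hi e \<le> int M"
      using cycle_excursion_short[OF k c(1)] unfolding M by blast
    then show ?thesis using span[of "hi - lo + 1"] by auto
  qed
  have visits: "int c \<le> hi - lo + 1" if "excursion lo hi e" "int n \<le> int d * (hi - lo + 1)" for lo hi e
    using span[of "hi - lo + 1"] that by (auto simp: excursion_def)
  have n: "2 \<le> n" "0 < n" "n dvd d * n" using assms(3) by auto
  have "gdiam (Qverts n n) (Qadj n d n) = enat (n + M)"
  proof (cases "2 * int c - 2 \<le> int (n div 2)")
    case True
    show ?thesis
    proof (rule Qdiam_eq_arith[OF n upper])
      show "0 \<le> int (n div 2)" "int (n div 2) < int n" using n by auto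
    qed (use True cycle_excursion_half_lower[OF n(2)] in \<open>auto simp: M\<close>)
  next
    case False
    show ?thesis
    proof (rule Qdiam_eq_arith[OF n upper])
      show "0 \<le> (0::int)" "0 < int n" using n by auto
    qed (use False visits cycle_excursion_span_lower[OF n(2) _ _ _ c(2)] in \<open>auto simp: M\<close>)
  qed
  then show ?thesis unfolding M_def c_def .
qed

section \<open>\<open>COR(d,r)\<close> is isomorphic to \<open>Q\<^sub>d\<^sub>r(d,r)\<close>\<close>

definition cyc_shift :: "nat \<Rightarrow> int \<Rightarrow> nat set \<Rightarrow> nat set" where
  "cyc_shift m z a = (\<lambda>i. nat ((int i + z) mod int m)) ` a"

lemma shiftv_eq_cyc_shift: "m > 0 \<Longrightarrow> shiftv m j a = cyc_shift m (int j) a"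
  unfolding shiftv_def cyc_shift_def by (intro image_cong) (auto simp: nat_mod_distrib nat_add_distrib)

lemma cyc_shift_add: "m > 0 \<Longrightarrow> cyc_shift m z (cyc_shift m w a) = cyc_shift m (w + z) a"
  unfolding cyc_shift_def image_image by (intro image_cong) (auto simp: mod_add_left_eq add.assoc)

lemma cyc_shift_cong: "z mod int m = w mod int m \<Longrightarrow> cyc_shift m z a = cyc_shift m w a"
  unfolding cyc_shift_def by (intro image_cong refl) (metis mod_add_right_eq)

lemma cyc_shift_0: "a \<subseteq> {0..<m} \<Longrightarrow> cyc_shift m 0 a = a"
  unfolding cyc_shift_def by (force intro: image_eqI)

lemma cyc_shift_cancel:
  "m > 0 \<Longrightarrow> a \<subseteq> {0..<m} \<Longrightarrow> (w + z) mod int m = 0 \<Longrightarrow> cyc_shift m z (cyc_shift m w a) = a"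
  by (metis cyc_shift_add cyc_shift_cong cyc_shift_0 mod_0)

lemma cyc_shift_subset: "m > 0 \<Longrightarrow> cyc_shift m z a \<subseteq> {0..<m}"
  unfolding cyc_shift_def by (auto simp: nat_less_iff)

lemma cyc_shift_empty_iff [simp]: "cyc_shift m z a = {} \<longleftrightarrow> a = {}"
  unfolding cyc_shift_def by simp

lemma inj_on_cyc_shift: "m > 0 \<Longrightarrow> inj_on (\<lambda>i. nat ((int i + z) mod int m)) {0..<m}"
proof (rule inj_onI)
  fix i j assume "m > 0" "i \<in> {0..<m}" "j \<in> {0..<m}"
    and "nat ((int i + z) mod int m) = nat ((int j + z) mod int m)"
  then have "(int i + z) mod int m = (int j + z) mod int m" by (simp add: eq_nat_nat_iff)
  then have "(int i + z - z) mod int m = (int j + z - z) mod int m" by (metis mod_diff_left_eq)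
  then show "i = j" using \<open>i \<in> {0..<m}\<close> \<open>j \<in> {0..<m}\<close> by simp
qed

lemma cyc_shift_symdiff:
  assumes "m > 0" "a \<subseteq> {0..<m}" "b \<subseteq> {0..<m}"
  shows "cyc_shift m z (symdiff a b) = symdiff (cyc_shift m z a) (cyc_shift m z b)"
proof -
  define f where "f = (\<lambda>i. nat ((int i + z) mod int m))"
  have inj: "inj_on f (a \<union> b)"
    unfolding f_def using assms by (intro inj_on_subset[OF inj_on_cyc_shift]) auto
  have "f ` (a - b) = f ` a - f ` b" "f ` (b - a) = f ` b - f ` a"
    by (rule inj_on_image_set_diff[OF inj]; auto)+
  then show ?thesis unfolding cyc_shift_def symdiff_def f_def[symmetric] by (simp add: image_Un)
qed

lemma cyc_shift_unitv:
  assumes "m > 0" "i \<ge> 1"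
  shows "cyc_shift m (int d * int x) (unitv m i) = unitv m (i + d * x)"
proof -
  have "(int ((i + m - 1) mod m) + int d * int x) mod int m = (int i + int m - 1 + int d * int x) mod int m"
    using assms by (simp add: of_nat_mod of_nat_diff mod_add_left_eq)
  also have "\<dots> = int ((i + d * x + m - 1) mod m)"
    using assms by (simp add: of_nat_mod of_nat_diff algebra_simps)
  finally show ?thesis unfolding cyc_shift_def unitv_def by simp
qed

text \<open>\<open>(r - x) mod r\<close> is the negative of \<open>x\<close> in \<open>\<int>\<^sub>r\<close>; scaled by \<open>d\<close> it is the negative
  modulo \<open>d r\<close>.\<close>

lemma ring_neg_cancel:
  assumes "x < r"
  shows "(int d * int ((r - x) mod r) + int d * int x) mod int (d * r) = 0"
proof (cases "x = 0")
  case False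
  then have "int d * int ((r - x) mod r) + int d * int x = int (d * r)"
    using assms by (simp add: of_nat_diff algebra_simps)
  then show ?thesis by simp
qed simp

lemma ring_neg_shift:
  fixes x y t r :: nat
  assumes "x < r" "y < r" "t < r"
  shows "((r - x) mod r + y) mod r = t \<longleftrightarrow> (r - y) mod r = ((r - x) mod r + r - t) mod r"
proof -
  define X Y where "X = (r - x) mod r" and "Y = (r - y) mod r"
  have X: "int X mod int r = (- int x) mod int r" and Y: "int Y mod int r = (- int y) mod int r"
    unfolding X_def Y_def using assms
    by (simp_all add: of_nat_mod of_nat_diff mod_diff_left_eq[of "int r", symmetric])
  have "(X + y) mod r = t \<longleftrightarrow> (int X + int y) mod int r = int t mod int r"
    using assms by (metis of_nat_add of_nat_eq_iff of_nat_mod mod_less)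
  also have "\<dots> \<longleftrightarrow> (int y - int x) mod int r = int t mod int r"
    using X by (metis add.commute mod_add_cong uminus_add_conv_diff)
  also have "\<dots> \<longleftrightarrow> (int X - int t) mod int r = int Y mod int r"
    using X Y unfolding mod_eq_dvd_iff by (smt (verit) dvd_add_right_iff)
  also have "\<dots> \<longleftrightarrow> Y = (X + r - t) mod r"
  proof -
    have "int ((X + r - t) mod r) = (int X - int t + int r) mod int r"
      using assms by (simp add: of_nat_mod of_nat_diff algebra_simps)
    moreover have "int Y mod int r = int Y" using assms unfolding Y_def by simp
    ultimately show ?thesis by (metis mod_add_self2 of_nat_eq_iff)
  qed
  finally show ?thesis unfolding X_def Y_def .
qed

lemma cor_inv_eq:
  "0 < d * r \<Longrightarrow> cor_inv d r (a, x) = (cyc_shift (d * r) (int d * int ((r - x) mod r)) a, (r - x) mod r)"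
  unfolding cor_inv_def by (simp add: shiftv_eq_cyc_shift)

lemma cor_inv_Qverts: "0 < d * r \<Longrightarrow> u \<in> Qverts (d * r) r \<Longrightarrow> cor_inv d r u \<in> Qverts (d * r) r"
  unfolding Qverts_def using cyc_shift_subset by (auto simp: cor_inv_eq)

lemma cor_inv_cor_inv:
  assumes "0 < d * r" "u \<in> Qverts (d * r) r"
  shows "cor_inv d r (cor_inv d r u) = u"
proof -
  obtain a x where u: "u = (a, x)" "a \<subseteq> {0..<d * r}" "x < r" using assms(2) by (auto simp: Qverts_def)
  have "(r - (r - x) mod r) mod r = x" using u(3) by (cases "x = 0") auto
  moreover have "(int d * int ((r - x) mod r) + int d * int x) mod int (d * r) = 0"
    using ring_neg_cancel[OF u(3)] .
  ultimately show ?thesis using assms(1) u by (simp add: cor_inv_eq cyc_shift_cancel)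
qed

lemma cor_quotient:
  assumes "0 < d * r" "u \<in> Qverts (d * r) r" "v \<in> Qverts (d * r) r"
  shows "cor_mult d r (cor_inv d r u) v =
    (cyc_shift (d * r) (int d * int (snd v)) (symdiff (fst (cor_inv d r u)) (fst (cor_inv d r v))),
     (snd (cor_inv d r u) + snd v) mod r)"
proof -
  obtain b y where v: "v = (b, y)" "b \<subseteq> {0..<d * r}" "y < r" using assms(3) by (auto simp: Qverts_def)
  define A B where "A = fst (cor_inv d r u)" and "B = fst (cor_inv d r v)"
  have "cor_inv d r u \<in> Qverts (d * r) r" "cor_inv d r v \<in> Qverts (d * r) r"
    using cor_inv_Qverts[OF assms(1)] assms(2,3) by auto
  then have AB: "A \<subseteq> {0..<d * r}" "B \<subseteq> {0..<d * r}"
    unfolding A_def B_def Qverts_def by auto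
  have "b = cyc_shift (d * r) (int d * int y) B"
    unfolding B_def v(1) using cor_inv_eq[OF assms(1)] ring_neg_cancel[OF v(3)] assms(1) v(2)
    by (simp add: cyc_shift_cancel)
  then show ?thesis
    unfolding cor_mult_def A_def[symmetric] B_def[symmetric]
    using AB assms(1) v(1) by (simp add: shiftv_eq_cyc_shift cyc_shift_symdiff mult.commute)
qed

lemma cyc_shift_eq_unitv_iff:
  assumes "m > 0" "S \<subseteq> {0..<m}" "1 \<le> i" "(z + int d * int y) mod int m = 0"
  shows "cyc_shift m z S = unitv m i \<longleftrightarrow> S = unitv m (i + d * y)"
proof -
  have "unitv m i \<subseteq> {0..<m}" using assms(1) by (simp add: unitv_def)
  moreover have "(int d * int y + z) mod int m = 0" using assms(4) by (simp add: add.commute)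
  ultimately show ?thesis
    using cyc_shift_cancel[OF assms(1,2,4)] cyc_shift_cancel[OF assms(1)] cyc_shift_unitv[OF assms(1,3)]
    by metis
qed

lemma mem_cor_conn_iff:
  assumes "3 \<le> r"
  shows "(T, t) \<in> cor_conn d r \<longleftrightarrow>
    (T = {} \<and> (t = 1 \<or> t = r - 1)) \<or> (t = 0 \<and> (\<exists>i\<in>{1..d}. T = unitv (d * r) i))"
  unfolding cor_conn_def using assms by auto

lemma Qadj_pair_iff:
  assumes "2 \<le> r" "(A, X) \<in> Qverts m r" "(B, Y) \<in> Qverts m r"
  shows "Qadj m d r (A, X) (B, Y) \<longleftrightarrow> (B = A \<and> (Y = (X + 1) mod r \<or> Y = (X + r - 1) mod r)) \<or>
    (Y = X \<and> (\<exists>i\<in>{1..d}. symdiff A B = unitv m (i + d * X)))"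
proof -
  have "X < r" using assms(2) by (simp add: Qverts_def)
  then have "(X + 1) mod r \<noteq> X" "(X + r - 1) mod r \<noteq> X"
    using mod_succ_neq mod_pred_neq assms(1) by auto
  then have ne: "(A, X) \<noteq> (B, Y)"
    if "(B = A \<and> (Y = (X + 1) mod r \<or> Y = (X + r - 1) mod r)) \<or>
      (Y = X \<and> (\<exists>c\<in>flip_window m d X. B = symdiff A {c}))"
    using that symdiff_singleton_neq by auto
  have "(\<exists>i\<in>{1..d}. symdiff A B = unitv m (i + d * X)) \<longleftrightarrow> (\<exists>c\<in>flip_window m d X. B = symdiff A {c})"
    unfolding symdiff_eq_iff flip_window_def unitv_def by simp
  then show ?thesis
    unfolding Qadj_iff fst_conv snd_conv using assms(2,3) ne by blast
qed

text \<open>In the Cayley graph \<open>u \<sim> v\<close> iff \<open>u\<inverse> v \<in> S\<close>; under \<open>u \<mapsto> u\<inverse>\<close> this becomes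
  \<open>v\<inverse> \<in> S u\<inverse>\<close>, and left multiplication by the generators is exactly a ring step or a flip
  in the window of the ring position.\<close>

lemma CORadj_iff_Qadj:
  assumes "1 \<le> d" "3 \<le> r" "u \<in> Qverts (d * r) r" "v \<in> Qverts (d * r) r"
  shows "CORadj d r u v \<longleftrightarrow> Qadj (d * r) d r (cor_inv d r u) (cor_inv d r v)"
proof -
  define m where "m = d * r"
  have m: "0 < m" unfolding m_def using assms(1,2) by simp
  obtain a x b y where uv: "u = (a, x)" "v = (b, y)" "x < r" "y < r"
    using assms(3,4) by (auto simp: Qverts_def)
  define A X B Y where "A = fst (cor_inv d r u)" and "X = snd (cor_inv d r u)"
    and "B = fst (cor_inv d r v)" and "Y = snd (cor_inv d r v)"
  have inv: "cor_inv d r u = (A, X)" "cor_inv d r v = (B, Y)"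
    unfolding A_def X_def B_def Y_def by simp_all
  have XY: "X = (r - x) mod r" "Y = (r - y) mod r"
    unfolding X_def Y_def uv using m by (simp_all add: cor_inv_eq m_def)
  have V: "(A, X) \<in> Qverts m r" "(B, Y) \<in> Qverts m r"
    using cor_inv_Qverts[of d r u] cor_inv_Qverts[of d r v] assms(3,4) m by (simp_all add: inv m_def)
  then have AB: "symdiff A B \<subseteq> {0..<m}" by (auto simp: Qverts_def symdiff_def)
  have "(int d * int y + int d * int Y) mod int m = 0"
    unfolding XY m_def using ring_neg_cancel[OF uv(4)] by (simp add: add.commute)
  note shift_unit = cyc_shift_eq_unitv_iff[OF m AB _ this]
  have RF: "(X + y) mod r = 0 \<longleftrightarrow> Y = X" "(X + y) mod r = 1 \<longleftrightarrow> Y = (X + r - 1) mod r"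
    "(X + y) mod r = r - 1 \<longleftrightarrow> Y = (X + 1) mod r"
    using ring_neg_shift[OF uv(3,4), of 0] ring_neg_shift[OF uv(3,4), of 1]
      ring_neg_shift[OF uv(3,4), of "r - 1"] assms(2) unfolding XY by auto
  have "CORadj d r u v \<longleftrightarrow> (cyc_shift m (int d * int y) (symdiff A B), (X + y) mod r) \<in> cor_conn d r"
    using cor_quotient[of d r u v] assms m
    unfolding CORadj_def CORverts_def Qverts_def[symmetric] m_def A_def B_def X_def uv by simp
  also have "\<dots> \<longleftrightarrow> (B = A \<and> (Y = (X + 1) mod r \<or> Y = (X + r - 1) mod r)) \<or>
      (Y = X \<and> (\<exists>i\<in>{1..d}. symdiff A B = unitv m (i + d * X)))"
    unfolding mem_cor_conn_iff[OF assms(2)] m_def[symmetric] RF cyc_shift_empty_iff symdiff_empty_iff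
    using shift_unit by auto
  also have "\<dots> \<longleftrightarrow> Qadj m d r (A, X) (B, Y)"
    using Qadj_pair_iff[OF _ V] assms(2) by simp
  finally show ?thesis unfolding inv m_def .
qed

lemma COR_gdiam_eq_Q:
  assumes "1 \<le> d" "3 \<le> r"
  shows "gdiam (CORverts d r) (CORadj d r) = gdiam (Qverts (d * r) r) (Qadj (d * r) d r)"
proof -
  have V: "CORverts d r = Qverts (d * r) r" unfolding CORverts_def Qverts_def ..
  have pos: "0 < d * r" using assms by simp
  show ?thesis unfolding V
  proof (rule gdiam_involution_invariant[where f = "cor_inv d r"])
    fix u v
    show "CORadj d r u v \<Longrightarrow> u \<in> Qverts (d * r) r \<and> v \<in> Qverts (d * r) r"
      unfolding CORadj_def V by blast
    show "Qadj (d * r) d r u v \<Longrightarrow> u \<in> Qverts (d * r) r \<and> v \<in> Qverts (d * r) r"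
      unfolding Qadj_def by blast
    show "u \<in> Qverts (d * r) r \<Longrightarrow> cor_inv d r u \<in> Qverts (d * r) r"
      by (rule cor_inv_Qverts[OF pos])
    show "u \<in> Qverts (d * r) r \<Longrightarrow> cor_inv d r (cor_inv d r u) = u"
      by (rule cor_inv_cor_inv[OF pos])
    show "u \<in> Qverts (d * r) r \<Longrightarrow> v \<in> Qverts (d * r) r \<Longrightarrow>
        CORadj d r u v \<longleftrightarrow> Qadj (d * r) d r (cor_inv d r u) (cor_inv d r v)"
      by (rule CORadj_iff_Qadj[OF assms])
  qed
qed

lemma cycle_excursion_full:
  fixes r :: nat and k :: int
  assumes "3 \<le> r" "0 \<le> k" "k < int r"
  shows "\<exists>lo hi e. excursion lo hi e \<and> e mod int r = k \<and> int r \<le> hi - lo + 1 \<and>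
    excursion_len lo hi e \<le> (if r = 3 then int r else int r + int (r div 2) - 2)"
proof -
  have half: "int r \<le> 2 * int (r div 2) + 1" "2 * int (r div 2) \<le> int r" by linarith+
  consider "k = 0" | "0 < k" "k \<le> int (r div 2)" | "int (r div 2) < k" using assms(2) by linarith
  then show ?thesis
  proof cases
    case 1
    then have "excursion (- int r) 0 (- int r) \<and> (- int r) mod int r = k \<and>
        excursion_len (- int r) 0 (- int r) \<le> (if r = 3 then int r else int r + int (r div 2) - 2)"
      using assms half unfolding excursion_def excursion_len_def by auto
    then show ?thesis by fastforce
  next
    case 2
    have "(k - int r) mod int r = k" using assms by (simp add: mod_diff_right_eq[symmetric])
    moreover have "excursion (1 - int r) 0 (k - int r) \<and>
        excursion_len (1 - int r) 0 (k - int r) \<le> (if r = 3 then int r else int r + int (r div 2) - 2)"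
      using assms half 2 unfolding excursion_def excursion_len_def by auto
    ultimately show ?thesis by fastforce
  next
    case 3
    then have "excursion (k - (int r - 1)) k k \<and> k mod int r = k \<and>
        excursion_len (k - (int r - 1)) k k \<le> (if r = 3 then int r else int r + int (r div 2) - 2)"
      using assms half unfolding excursion_def excursion_len_def by auto
    then show ?thesis by fastforce
  qed
qed

lemma cycle_excursion_full_lower:
  assumes "3 \<le> r" "excursion lo hi e" "e mod int r = (if r = 3 then 0 else int (r div 2))"
    "int r \<le> hi - lo + 1"
  shows "(if r = 3 then int r else int r + int (r div 2) - 2) \<le> excursion_len lo hi e"
proof -
  have half: "int r \<le> 2 * int (r div 2) + 1" "2 * int (r div 2) \<le> int r" by linarith+
  have len: "\<bar>e\<bar> \<le> excursion_len lo hi e" "2 * (int r - 1) - \<bar>e\<bar> \<le> excursion_len lo hi e"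
    using abs_le_excursion_len[OF assms(2)] assms(4) unfolding excursion_len_def by auto
  from int_mod_cases[OF _ assms(3)] assms(1) show ?thesis
    using len half by (auto split: if_splits)
qed

theorem CORdiam:
  assumes "1 \<le> d" "3 \<le> r"
  shows "gdiam (CORverts d r) (CORadj d r) =
    enat (if r = 3 then (d + 1) * r else (d + 1) * r + r div 2 - 2)"
proof -
  define M where "M = (if r = 3 then r else r + r div 2 - 2)"
  have M: "int M = (if r = 3 then int r else int r + int (r div 2) - 2)"
    unfolding M_def using assms(2) by auto
  have span: "int (d * r) \<le> int d * z \<longleftrightarrow> int r \<le> z" for z
    using assms(1) by (simp add: mult_le_cancel_left_pos)
  have "gdiam (Qverts (d * r) r) (Qadj (d * r) d r) = enat (d * r + M)"
  proof (rule Qdiam_eq_arith)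
    show "2 \<le> r" "0 < d * r" "d * r dvd d * r" using assms by auto
    show "0 \<le> (if r = 3 then 0 else int (r div 2))" "(if r = 3 then 0 else int (r div 2)) < int r"
      using assms(2) by auto
  next
    fix k :: int assume "0 \<le> k" "k < int r"
    then show "\<exists>lo hi e. excursion lo hi e \<and> e mod int r = k \<and>
        int (d * r) \<le> int d * (hi - lo + 1) \<and> excursion_len lo hi e \<le> int M"
      unfolding M span using cycle_excursion_full[OF assms(2)] by blast
  next
    fix lo hi e assume "excursion lo hi e" "e mod int r = (if r = 3 then 0 else int (r div 2))"
      "int (d * r) \<le> int d * (hi - lo + 1)"
    then show "int M \<le> excursion_len lo hi e"
      unfolding M span using cycle_excursion_full_lower[OF assms(2)] by blast
  qed
  moreover have "(if r = 3 then (d + 1) * r else (d + 1) * r + r div 2 - 2) = d * r + M"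
    unfolding M_def using assms(2) by auto
  ultimately show ?thesis using COR_gdiam_eq_Q[OF assms] by simp
qed

theorem mainTheorem10:
  shows "(\<forall>n d :: nat. 2 \<le> d \<and> d \<le> n \<and> 3 \<le> n \<longrightarrow>
           gdiam (Qverts n n) (Qadj n d n) =
             enat (n + max (n div 2) (2 * ((n + d - 1) div d) - 2))) \<and>
         (\<forall>d r :: nat. 1 \<le> d \<and> 3 \<le> r \<and> 2 \<le> d * r \<longrightarrow>
           gdiam (CORverts d r) (CORadj d r) =
             enat (if r = 3 then (d + 1) * r else (d + 1) * r + r div 2 - 2))"
  using Qdiam CORdiam by blast

end
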